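(* Let $A$ be an associative unital algebra and $(H,\pi_r,\psi_r)$ a right twisting datum for $A$, where $H$ is a Hopf algebra with bijective antipode $S$. Define $\pi_l:H^{op}\otimes A\to A$, $\pi_l(h\otimes a)=a\cdot h$, and $\psi_l:A\to H^{op}\otimes A$, $\psi_l(a)=S^{-1}(a_{<1>})\otimes a_{<0>}$. Then $(H^{op},\pi_l,\psi_l)$ is a left twisting datum for $A$, and the map $\lambda:(A,\diamond)\to(A,\star)$, $\lambda(a)=a_{<0>}\cdot S^{-1}(a_{<1>})$, is an algebra isomorphism with inverse $\lambda^{-1}(a)=a_{<0>}\cdot a_{<1>}$.
   Context: Work over a field $k$. A right twisting datum $(H,\pi_r,\psi_r)$ for an algebra $A$ ($H$ a bialgebra): $A$ is a right $H$-module algebra (action $\pi_r(a\otimes h)=a\cdot h$, with $(ab)\cdot h=(a\cdot h_1)(b\cdot h_2)$, $1\cdot h=\varepsilon(h)1$) and a right $H$-comodule algebra (coaction $\psi_r(a)=a_{<0>}\otimes a_{<1>}$, an algebra map) with $(a\cdot h)_{<0>}\otimes(a\cdot h)_{<1>}=a_{<0>}\cdot h\otimes a_{<1>}$; the right twisted product is $a\diamond b=(a\cdot b_{<1>})b_{<0>}$. A left twisting datum $(K,\pi,\psi)$ for $A$: $A$ a left $K$-module algebra ($k\cdot a$) and left $K$-comodule algebra ($a\mapsto a_{(-1)}\otimes a_{(0)}$) with $(k\cdot a)_{(-1)}\otimes(k\cdot a)_{(0)}=a_{(-1)}\otimes k\cdot a_{(0)}$; the left twisted product is $a\star b=a_{(0)}(a_{(-1)}\cdot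 b)$. Here $\star$ is the left twisted product for $(H^{op},\pi_l,\psi_l)$, so $a\star b=a_{<0>}(b\cdot S^{-1}(a_{<1>}))$. *)

theory Defs
  imports Complex_Main
begin

(* Vector spaces over a field 'k are types 'v::ab_group_add with a scalar
   multiplication s :: 'k => 'v => 'v satisfying the locale vector_space.
   An element of V (x) W is represented by a finite list of simple tensors
   [(v1,w1),...,(vn,wn)] meaning sum_i vi (x) wi; two representatives are equal as tensors
   iff all bilinear functionals V x W -> k agree on them (faithful over a field).
   Coproducts, coactions are maps into such representatives (Sweedler notation). *)

definition klinear :: "('k::field \<Rightarrow> 'v::ab_group_add \<Rightarrow> 'v) \<Rightarrow> ('k \<Rightarrow> 'w::ab_group_add \<Rightarrow> 'w) \<Rightarrow> ('v \<Rightarrow> 'w) \<Rightarrow> bool" where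
  "klinear s1 s2 f \<longleftrightarrow> (\<forall>x y. f (x + y) = f x + f y) \<and> (\<forall>c x. f (s1 c x) = s2 c (f x))"

definition bilin :: "('k::field \<Rightarrow> 'v::ab_group_add \<Rightarrow> 'v) \<Rightarrow> ('k \<Rightarrow> 'w::ab_group_add \<Rightarrow> 'w)
    \<Rightarrow> ('v \<Rightarrow> 'w \<Rightarrow> 'k) \<Rightarrow> bool" where
  "bilin s1 s2 f \<longleftrightarrow> (\<forall>w. klinear s1 (*) (\<lambda>v. f v w)) \<and> (\<forall>v. klinear s2 (*) (\<lambda>w. f v w))"

definition trilin :: "('k::field \<Rightarrow> 'u::ab_group_add \<Rightarrow> 'u) \<Rightarrow> ('k \<Rightarrow> 'v::ab_group_add \<Rightarrow> 'v)
    \<Rightarrow> ('k \<Rightarrow> 'w::ab_group_add \<Rightarrow> 'w) \<Rightarrow> ('u \<Rightarrow> 'v \<Rightarrow> 'w \<Rightarrow> 'k) \<Rightarrow> bool" where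
  "trilin s1 s2 s3 f \<longleftrightarrow> (\<forall>v w. klinear s1 (*) (\<lambda>u. f u v w)) \<and> (\<forall>u w. klinear s2 (*) (\<lambda>v. f u v w))
      \<and> (\<forall>u v. klinear s3 (*) (\<lambda>w. f u v w))"

definition teq2 :: "('k::field \<Rightarrow> 'v::ab_group_add \<Rightarrow> 'v) \<Rightarrow> ('k \<Rightarrow> 'w::ab_group_add \<Rightarrow> 'w)
    \<Rightarrow> ('v \<times> 'w) list \<Rightarrow> ('v \<times> 'w) list \<Rightarrow> bool" where
  "teq2 s1 s2 xs ys \<longleftrightarrow> (\<forall>f. bilin s1 s2 f \<longrightarrow>
      sum_list (map (\<lambda>(v,w). f v w) xs) = sum_list (map (\<lambda>(v,w). f v w) ys))"

definition teq3 :: "('k::field \<Rightarrow> 'u::ab_group_add \<Rightarrow> 'u) \<Rightarrow> ('k \<Rightarrow> 'v::ab_group_add \<Rightarrow> 'v)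
    \<Rightarrow> ('k \<Rightarrow> 'w::ab_group_add \<Rightarrow> 'w) \<Rightarrow> ('u \<times> 'v \<times> 'w) list \<Rightarrow> ('u \<times> 'v \<times> 'w) list \<Rightarrow> bool" where
  "teq3 s1 s2 s3 xs ys \<longleftrightarrow> (\<forall>f. trilin s1 s2 s3 f \<longrightarrow>
      sum_list (map (\<lambda>(u,v,w). f u v w) xs) = sum_list (map (\<lambda>(u,v,w). f u v w) ys))"

definition kalg :: "('k::field \<Rightarrow> 'a::ab_group_add \<Rightarrow> 'a) \<Rightarrow> ('a \<Rightarrow> 'a \<Rightarrow> 'a) \<Rightarrow> 'a \<Rightarrow> bool" where
  "kalg s m u \<longleftrightarrow> vector_space s
     \<and> (\<forall>x y z. m (m x y) z = m x (m y z))
     \<and> (\<forall>x. m u x = x \<and> m x u = x)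
     \<and> (\<forall>x y z. m x (y + z) = m x y + m x z \<and> m (x + y) z = m x z + m y z)
     \<and> (\<forall>c x y. m (s c x) y = s c (m x y) \<and> m x (s c y) = s c (m x y))"

definition bialg :: "('k::field \<Rightarrow> 'h::ab_group_add \<Rightarrow> 'h) \<Rightarrow> ('h \<Rightarrow> 'h \<Rightarrow> 'h) \<Rightarrow> 'h
    \<Rightarrow> ('h \<Rightarrow> ('h \<times> 'h) list) \<Rightarrow> ('h \<Rightarrow> 'k) \<Rightarrow> bool" where
  "bialg s m u D e \<longleftrightarrow> kalg s m u
     \<and> (\<forall>x y. teq2 s s (D (x + y)) (D x @ D y))
     \<and> (\<forall>c x. teq2 s s (D (s c x)) (map (\<lambda>(a,b). (s c a, b)) (D x)))
     \<and> (\<forall>x. teq3 s s s [(a1, a2, b). (a,b) \<leftarrow> D x, (a1,a2) \<leftarrow> D a]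
                        [(a, b1, b2). (a,b) \<leftarrow> D x, (b1,b2) \<leftarrow> D b])
     \<and> klinear s (*) e
     \<and> (\<forall>x. sum_list (map (\<lambda>(a,b). s (e a) b) (D x)) = x
          \<and> sum_list (map (\<lambda>(a,b). s (e b) a) (D x)) = x)
     \<and> (\<forall>x y. teq2 s s (D (m x y)) [(m a c, m b d). (a,b) \<leftarrow> D x, (c,d) \<leftarrow> D y])
     \<and> teq2 s s (D u) [(u, u)]
     \<and> (\<forall>x y. e (m x y) = e x * e y) \<and> e u = 1"

definition hopf :: "('k::field \<Rightarrow> 'h::ab_group_add \<Rightarrow> 'h) \<Rightarrow> ('h \<Rightarrow> 'h \<Rightarrow> 'h) \<Rightarrow> 'h
    \<Rightarrow> ('h \<Rightarrow> ('h \<times> 'h) list) \<Rightarrow> ('h \<Rightarrow> 'k) \<Rightarrow> ('h \<Rightarrow> 'h) \<Rightarrow> bool" where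
  "hopf s m u D e S \<longleftrightarrow> bialg s m u D e \<and> klinear s s S
     \<and> (\<forall>x. sum_list (map (\<lambda>(a,b). m (S a) b) (D x)) = s (e x) u
          \<and> sum_list (map (\<lambda>(a,b). m a (S b)) (D x)) = s (e x) u)"

text \<open>Right twisting datum (H, act, psi) for the algebra (sA, mA, uA):
  act a h = a . h,  psi a = [(a_<0>, a_<1>)].\<close>
definition right_twisting_datum ::
  "('k::field \<Rightarrow> 'a::ab_group_add \<Rightarrow> 'a) \<Rightarrow> ('a \<Rightarrow> 'a \<Rightarrow> 'a) \<Rightarrow> 'a
   \<Rightarrow> ('k \<Rightarrow> 'h::ab_group_add \<Rightarrow> 'h) \<Rightarrow> ('h \<Rightarrow> 'h \<Rightarrow> 'h) \<Rightarrow> 'h \<Rightarrow> ('h \<Rightarrow> ('h \<times> 'h) list) \<Rightarrow> ('h \<Rightarrow> 'k)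
   \<Rightarrow> ('a \<Rightarrow> 'h \<Rightarrow> 'a) \<Rightarrow> ('a \<Rightarrow> ('a \<times> 'h) list) \<Rightarrow> bool" where
  "right_twisting_datum sA mA uA sH mH uH D e act psi \<longleftrightarrow>
     kalg sA mA uA \<and> bialg sH mH uH D e
     \<comment> \<open>right H-module algebra\<close>
     \<and> (\<forall>h. klinear sA sA (\<lambda>a. act a h)) \<and> (\<forall>a. klinear sH sA (\<lambda>h. act a h))
     \<and> (\<forall>a. act a uH = a) \<and> (\<forall>a h g. act a (mH h g) = act (act a h) g)
     \<and> (\<forall>a b h. act (mA a b) h = sum_list (map (\<lambda>(h1,h2). mA (act a h1) (act b h2)) (D h)))
     \<and> (\<forall>h. act uA h = sA (e h) uA)
     \<comment> \<open>right H-comodule algebra\<close>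
     \<and> (\<forall>a b. teq2 sA sH (psi (a + b)) (psi a @ psi b))
     \<and> (\<forall>c a. teq2 sA sH (psi (sA c a)) (map (\<lambda>(x,y). (sA c x, y)) (psi a)))
     \<and> (\<forall>a. teq3 sA sH sH [(x0, x1, y). (x,y) \<leftarrow> psi a, (x0,x1) \<leftarrow> psi x]
                           [(x, y1, y2). (x,y) \<leftarrow> psi a, (y1,y2) \<leftarrow> D y])
     \<and> (\<forall>a. sum_list (map (\<lambda>(x,y). sA (e y) x) (psi a)) = a)
     \<and> (\<forall>a b. teq2 sA sH (psi (mA a b)) [(mA x z, mH y w). (x,y) \<leftarrow> psi a, (z,w) \<leftarrow> psi b])
     \<and> teq2 sA sH (psi uA) [(uA, uH)]
     \<comment> \<open>compatibility\<close>
     \<and> (\<forall>a h. teq2 sA sH (psi (act a h)) (map (\<lambda>(x,y). (act x h, y)) (psi a)))"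

text \<open>Left twisting datum (K, lact, psi) for (sA, mA, uA):
  lact k a = k . a,  psi a = [(a_(-1), a_(0))].\<close>
definition left_twisting_datum ::
  "('k::field \<Rightarrow> 'a::ab_group_add \<Rightarrow> 'a) \<Rightarrow> ('a \<Rightarrow> 'a \<Rightarrow> 'a) \<Rightarrow> 'a
   \<Rightarrow> ('k \<Rightarrow> 'h::ab_group_add \<Rightarrow> 'h) \<Rightarrow> ('h \<Rightarrow> 'h \<Rightarrow> 'h) \<Rightarrow> 'h \<Rightarrow> ('h \<Rightarrow> ('h \<times> 'h) list) \<Rightarrow> ('h \<Rightarrow> 'k)
   \<Rightarrow> ('h \<Rightarrow> 'a \<Rightarrow> 'a) \<Rightarrow> ('a \<Rightarrow> ('h \<times> 'a) list) \<Rightarrow> bool" where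
  "left_twisting_datum sA mA uA sK mK uK D e lact psi \<longleftrightarrow>
     kalg sA mA uA \<and> bialg sK mK uK D e
     \<comment> \<open>left K-module algebra\<close>
     \<and> (\<forall>k. klinear sA sA (\<lambda>a. lact k a)) \<and> (\<forall>a. klinear sK sA (\<lambda>k. lact k a))
     \<and> (\<forall>a. lact uK a = a) \<and> (\<forall>a k l. lact (mK k l) a = lact k (lact l a))
     \<and> (\<forall>a b k. lact k (mA a b) = sum_list (map (\<lambda>(k1,k2). mA (lact k1 a) (lact k2 b)) (D k)))
     \<and> (\<forall>k. lact k uA = sA (e k) uA)
     \<comment> \<open>left K-comodule algebra\<close>
     \<and> (\<forall>a b. teq2 sK sA (psi (a + b)) (psi a @ psi b))
     \<and> (\<forall>c a. teq2 sK sA (psi (sA c a)) (map (\<lambda>(y,x). (y, sA c x)) (psi a)))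
     \<and> (\<forall>a. teq3 sK sK sA [(y, x1, x0). (y,x) \<leftarrow> psi a, (x1,x0) \<leftarrow> psi x]
                           [(y1, y2, x). (y,x) \<leftarrow> psi a, (y1,y2) \<leftarrow> D y])
     \<and> (\<forall>a. sum_list (map (\<lambda>(y,x). sA (e y) x) (psi a)) = a)
     \<and> (\<forall>a b. teq2 sK sA (psi (mA a b)) [(mK y w, mA x z). (y,x) \<leftarrow> psi a, (w,z) \<leftarrow> psi b])
     \<and> teq2 sK sA (psi uA) [(uK, uA)]
     \<comment> \<open>compatibility\<close>
     \<and> (\<forall>a k. teq2 sK sA (psi (lact k a)) (map (\<lambda>(y,x). (y, lact k x)) (psi a)))"

definition right_twisted_prod :: "('a \<Rightarrow> 'a \<Rightarrow> 'a) \<Rightarrow> ('a \<Rightarrow> 'h \<Rightarrow> 'a) \<Rightarrow> ('a \<Rightarrow> ('a \<times> 'h) list)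
    \<Rightarrow> 'a \<Rightarrow> 'a \<Rightarrow> 'a::ab_group_add" where
  "right_twisted_prod mA act psi a b = sum_list (map (\<lambda>(x,y). mA (act a y) x) (psi b))"

definition left_twisted_prod :: "('a \<Rightarrow> 'a \<Rightarrow> 'a) \<Rightarrow> ('h \<Rightarrow> 'a \<Rightarrow> 'a) \<Rightarrow> ('a \<Rightarrow> ('h \<times> 'a) list)
    \<Rightarrow> 'a \<Rightarrow> 'a \<Rightarrow> 'a::ab_group_add" where
  "left_twisted_prod mA lact psi a b = sum_list (map (\<lambda>(y,x). mA x (lact y b)) (psi a))"

end

theory Submission
  imports Defs
begin

(*
  Tensors are represented by lists of simple tensors and compared against all scalar
  multilinear forms.  Since linear functionals separate points over a field, each such
  equation may be used inside a sum of an arbitrary multilinear expression with values in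
  any vector space, which is all that the Sweedler-notation computations require.

  The Hopf-algebraic input is that S, hence S^-1, is an anti-algebra and anti-coalgebra map;
  in particular Delta (S^-1 h) = S^-1 h_2 (x) S^-1 h_1.  This is exactly what makes
  psi_l(a) = S^-1(a_<1>) (x) a_<0> coassociative and multiplicative for the opposite product
  of H; counitality and the compatibility with the action are inherited from psi_r.

  The antipode identities h_2 S^-1(h_1) = e(h) 1 = S^-1(h_2) h_1, applied after coassociativity
  of psi_r, show that lambda and lambda^-1 are mutually inverse.  For multiplicativity, the
  module-algebra axiom and the anti-comultiplicativity of S^-1 reduce both lambda(a <> b) and
  lambda(a) * lambda(b) to  (a_<0> . S^-1(a_<2>)) (b_<0> . S^-1(a_<1> b_<1>)).
*)

lemma vector_space_field_mult: "vector_space ((*) :: 'k::field \<Rightarrow> 'k \<Rightarrow> 'k)"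
  by unfold_locales (auto simp: algebra_simps)

lemma klinear_add: "klinear s1 s2 f \<Longrightarrow> f (x + y) = f x + f y"
  unfolding klinear_def by blast

lemma klinear_scale: "klinear s1 s2 f \<Longrightarrow> f (s1 c x) = s2 c (f x)"
  unfolding klinear_def by blast

lemma klinear_zero: "klinear s1 s2 f \<Longrightarrow> f 0 = 0"
  by (metis add_cancel_right_right add_0 klinear_add)

lemma klinear_sum_list: "klinear s1 s2 f \<Longrightarrow> f (sum_list (map g xs)) = sum_list (map (\<lambda>x. f (g x)) xs)"
  by (induction xs) (auto simp: klinear_zero klinear_add)

lemma klinear_compose: "klinear s1 s2 g \<Longrightarrow> klinear s2 s3 f \<Longrightarrow> klinear s1 s3 (\<lambda>x. f (g x))"
  by (simp add: klinear_def)

lemma vector_space_scale_sum_list: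
  assumes "vector_space s"
  shows "s c (sum_list (map f xs)) = sum_list (map (\<lambda>x. s c (f x)) xs)"
proof -
  interpret vector_space s by fact
  show ?thesis by (induction xs) (auto simp: scale_right_distrib)
qed

lemma eq_if_klinear_functionals_eq:
  fixes s :: "'k::field \<Rightarrow> 'v::ab_group_add \<Rightarrow> 'v"
  assumes vs: "vector_space s" and eq: "\<And>\<phi>. klinear s (*) \<phi> \<Longrightarrow> \<phi> x = \<phi> y"
  shows "x = y"
proof (rule ccontr)
  assume "x \<noteq> y"
  interpret vector_space_pair s "(*) :: 'k \<Rightarrow> 'k \<Rightarrow> 'k"
    using vs vector_space_field_mult by (simp add: vector_space_pair_def)
  have "vs1.independent {x - y}" using \<open>x \<noteq> y\<close> by simp
  from linear_independent_extend[OF this, of "\<lambda>_. 1"]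
  obtain g where "Vector_Spaces.linear s (*) g" and g1: "g (x - y) = 1" by auto
  then have g: "klinear s (*) g" by (simp add: Vector_Spaces.linear_iff klinear_def)
  have "g x = g (x - y) + g y" using klinear_add[OF g, of "x - y" y] by simp
  with eq[OF g] g1 show False by simp
qed

lemma sum_list_map_cong: "(\<And>x. x \<in> set xs \<Longrightarrow> f x = g x) \<Longrightarrow> sum_list (map f xs) = sum_list (map g xs)"
  by (metis map_cong)

lemma sum_list_map_swap:
  "sum_list (map (\<lambda>a. sum_list (map (\<lambda>b. (f a b :: 'c::comm_monoid_add)) ys)) xs)
   = sum_list (map (\<lambda>b. sum_list (map (\<lambda>a. f a b) xs)) ys)"
  by (induction xs) (auto simp: sum_list_addf)

lemma sum_list_map_swap_nested:
  "sum_list (map (\<lambda>p. sum_list (map (\<lambda>b. sum_list (map (\<lambda>q. (f p b q :: 'c::comm_monoid_add)) (ys b))) xs)) zs)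
   = sum_list (map (\<lambda>b. sum_list (map (\<lambda>q. sum_list (map (\<lambda>p. f p b q) zs)) (ys b))) xs)"
proof -
  have "sum_list (map (\<lambda>p. sum_list (map (\<lambda>b. sum_list (map (\<lambda>q. f p b q) (ys b))) xs)) zs)
      = sum_list (map (\<lambda>b. sum_list (map (\<lambda>p. sum_list (map (\<lambda>q. f p b q) (ys b))) zs)) xs)"
    by (rule sum_list_map_swap)
  also have "\<dots> = sum_list (map (\<lambda>b. sum_list (map (\<lambda>q. sum_list (map (\<lambda>p. f p b q) zs)) (ys b))) xs)"
    by (simp only: sum_list_map_swap[of _ "ys _"])
  finally show ?thesis .
qed

lemma sum_list_map_concat:
  "sum_list (map g (concat xss)) = sum_list (map (\<lambda>xs. sum_list (map g xs)) xss)"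
  by (induction xss) auto

lemma teq2_sum_list_eq:
  assumes t: "teq2 s1 s2 xs ys" and vs: "vector_space sT"
    and l1: "\<And>w. klinear s1 sT (\<lambda>v. F v w)" and l2: "\<And>v. klinear s2 sT (\<lambda>w. F v w)"
  shows "sum_list (map (\<lambda>z. F (fst z) (snd z)) xs) = sum_list (map (\<lambda>z. F (fst z) (snd z)) ys)"
proof (rule eq_if_klinear_functionals_eq[OF vs])
  fix \<phi> assume \<phi>: "klinear sT (*) \<phi>"
  have "bilin s1 s2 (\<lambda>v w. \<phi> (F v w))"
    unfolding bilin_def klinear_def
    using klinear_add[OF \<phi>] klinear_scale[OF \<phi>] klinear_add[OF l1] klinear_scale[OF l1]
      klinear_add[OF l2] klinear_scale[OF l2] by simp
  with t have "sum_list (map (\<lambda>(v,w). \<phi> (F v w)) xs) = sum_list (map (\<lambda>(v,w). \<phi> (F v w)) ys)"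
    unfolding teq2_def by blast
  then show "\<phi> (sum_list (map (\<lambda>z. F (fst z) (snd z)) xs)) = \<phi> (sum_list (map (\<lambda>z. F (fst z) (snd z)) ys))"
    by (simp add: klinear_sum_list[OF \<phi>] split_def)
qed

lemma teq3_sum_list_eq:
  assumes t: "teq3 s1 s2 s3 xs ys" and vs: "vector_space sT"
    and l1: "\<And>v w. klinear s1 sT (\<lambda>u. F u v w)" and l2: "\<And>u w. klinear s2 sT (\<lambda>v. F u v w)"
    and l3: "\<And>u v. klinear s3 sT (\<lambda>w. F u v w)"
  shows "sum_list (map (\<lambda>z. F (fst z) (fst (snd z)) (snd (snd z))) xs)
       = sum_list (map (\<lambda>z. F (fst z) (fst (snd z)) (snd (snd z))) ys)"
proof (rule eq_if_klinear_functionals_eq[OF vs])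
  fix \<phi> assume \<phi>: "klinear sT (*) \<phi>"
  have "trilin s1 s2 s3 (\<lambda>u v w. \<phi> (F u v w))"
    unfolding trilin_def klinear_def
    using klinear_add[OF \<phi>] klinear_scale[OF \<phi>] klinear_add[OF l1] klinear_scale[OF l1]
      klinear_add[OF l2] klinear_scale[OF l2] klinear_add[OF l3] klinear_scale[OF l3] by simp
  with t have "sum_list (map (\<lambda>(u,v,w). \<phi> (F u v w)) xs) = sum_list (map (\<lambda>(u,v,w). \<phi> (F u v w)) ys)"
    unfolding teq3_def by blast
  then show "\<phi> (sum_list (map (\<lambda>z. F (fst z) (fst (snd z)) (snd (snd z))) xs))
      = \<phi> (sum_list (map (\<lambda>z. F (fst z) (fst (snd z)) (snd (snd z))) ys))"
    by (simp add: klinear_sum_list[OF \<phi>] split_def)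
qed

lemma teq2I:
  assumes "\<And>f. bilin s1 s2 f \<Longrightarrow>
    sum_list (map (\<lambda>z. f (fst z) (snd z)) xs) = sum_list (map (\<lambda>z. f (fst z) (snd z)) ys)"
  shows "teq2 s1 s2 xs ys"
  using assms unfolding teq2_def by (simp add: split_def)

lemma teq3I:
  assumes "\<And>f. trilin s1 s2 s3 f \<Longrightarrow>
    sum_list (map (\<lambda>z. f (fst z) (fst (snd z)) (snd (snd z))) xs)
    = sum_list (map (\<lambda>z. f (fst z) (fst (snd z)) (snd (snd z))) ys)"
  shows "teq3 s1 s2 s3 xs ys"
  using assms unfolding teq3_def by (simp add: split_def)

lemma bilin_klinear_left: "bilin s1 s2 f \<Longrightarrow> klinear s1 (*) (\<lambda>v. f v w)"
  and bilin_klinear_right: "bilin s1 s2 f \<Longrightarrow> klinear s2 (*) (\<lambda>w. f v w)"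
  by (simp_all add: bilin_def)

lemmas bilin_simps = klinear_add[OF bilin_klinear_left] klinear_add[OF bilin_klinear_right]
  klinear_scale[OF bilin_klinear_left] klinear_scale[OF bilin_klinear_right]

lemma trilin_klinear_1: "trilin s1 s2 s3 f \<Longrightarrow> klinear s1 (*) (\<lambda>u. f u v w)"
  and trilin_klinear_2: "trilin s1 s2 s3 f \<Longrightarrow> klinear s2 (*) (\<lambda>v. f u v w)"
  and trilin_klinear_3: "trilin s1 s2 s3 f \<Longrightarrow> klinear s3 (*) (\<lambda>w. f u v w)"
  by (simp_all add: trilin_def)

lemmas trilin_simps = klinear_add[OF trilin_klinear_1] klinear_add[OF trilin_klinear_2]
  klinear_add[OF trilin_klinear_3] klinear_scale[OF trilin_klinear_1]
  klinear_scale[OF trilin_klinear_2] klinear_scale[OF trilin_klinear_3]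

lemmas klinear_simps = klinear_def sum_list_addf sum_list_const_mult[symmetric] ac_simps

locale hopf_alg =
  fixes s :: "'k::field \<Rightarrow> 'h::ab_group_add \<Rightarrow> 'h" and m :: "'h \<Rightarrow> 'h \<Rightarrow> 'h" and u :: 'h
    and D :: "'h \<Rightarrow> ('h \<times> 'h) list" and e :: "'h \<Rightarrow> 'k" and S :: "'h \<Rightarrow> 'h"
  assumes hopf: "hopf s m u D e S"
begin

lemma bialg: "bialg s m u D e"
  using hopf by (simp add: hopf_def)

lemma scale_vector_space: "vector_space s"
  using bialg by (simp add: bialg_def kalg_def)

lemma m_assoc: "m (m x y) z = m x (m y z)"
  using bialg by (simp add: bialg_def kalg_def)

lemma m_simps [simp]:
  "m u x = x" "m x u = x"
  "m x (y + z) = m x y + m x z" "m (x + y) z = m x z + m y z"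
  "m (s c x) y = s c (m x y)" "m x (s c y) = s c (m x y)"
  using bialg by (simp_all add: bialg_def kalg_def)

lemma scale_simps [simp]:
  "s c (x + y) = s c x + s c y" "s c (s d x) = s (c * d) x" "s 1 x = x"
  using scale_vector_space by (simp_all add: vector_space_def)

lemma scale_sum_list [simp]: "s c (sum_list (map f xs)) = sum_list (map (\<lambda>x. s c (f x)) xs)"
  using scale_vector_space by (rule vector_space_scale_sum_list)

lemma counit_klinear: "klinear s (*) e"
  using bialg by (simp add: bialg_def)

lemma counit_simps [simp]: "e (x + y) = e x + e y" "e (s c x) = c * e x" "e 0 = 0" "e u = 1"
  using counit_klinear bialg by (simp_all add: klinear_add klinear_scale klinear_zero bialg_def)

lemma counit_m: "e (m x y) = e x * e y"
  using bialg by (simp add: bialg_def)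

lemma antipode_klinear: "klinear s s S"
  using hopf by (simp add: hopf_def)

lemma antipode_simps [simp]: "S (x + y) = S x + S y" "S (s c x) = s c (S x)" "S 0 = 0"
  using antipode_klinear by (simp_all add: klinear_add klinear_scale klinear_zero)

lemma antipode_sum_list: "S (sum_list (map f xs)) = sum_list (map (\<lambda>x. S (f x)) xs)"
  by (rule klinear_sum_list[OF antipode_klinear])

lemma counit_left: "sum_list (map (\<lambda>(a,b). s (e a) b) (D x)) = x"
  and counit_right: "sum_list (map (\<lambda>(a,b). s (e b) a) (D x)) = x"
  using bialg by (simp_all add: bialg_def)

lemma antipode_left: "sum_list (map (\<lambda>(a,b). m (S a) b) (D x)) = s (e x) u"
  and antipode_right: "sum_list (map (\<lambda>(a,b). m a (S b)) (D x)) = s (e x) u"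
  using hopf by (simp_all add: hopf_def)

context
  fixes sT :: "'k \<Rightarrow> 't::ab_group_add \<Rightarrow> 't"
  assumes vT: "vector_space sT"
begin

lemma comult_sum_klinear:
  assumes l1: "\<And>w. klinear s sT (\<lambda>v. F v w)" and l2: "\<And>v. klinear s sT (\<lambda>w. F v w)"
  shows "klinear s sT (\<lambda>x. sum_list (map (\<lambda>z. F (fst z) (snd z)) (D x)))"
proof -
  have "teq2 s s (D (x + y)) (D x @ D y)" "teq2 s s (D (s c x)) (map (\<lambda>(a,b). (s c a, b)) (D x))"
    for x y c using bialg by (simp_all add: bialg_def)
  from teq2_sum_list_eq[OF this(1) vT l1 l2] teq2_sum_list_eq[OF this(2) vT l1 l2]
  show ?thesis
    by (simp add: klinear_def split_def o_def klinear_scale[OF l1] vector_space_scale_sum_list[OF vT])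
qed

lemma coassoc_sum:
  assumes "\<And>v w. klinear s sT (\<lambda>u. F u v w)" "\<And>u w. klinear s sT (\<lambda>v. F u v w)"
    "\<And>u v. klinear s sT (\<lambda>w. F u v w)"
  shows "sum_list (map (\<lambda>z. sum_list (map (\<lambda>p. F (fst p) (snd p) (snd z)) (D (fst z)))) (D h))
       = sum_list (map (\<lambda>z. sum_list (map (\<lambda>p. F (fst z) (fst p) (snd p)) (D (snd z)))) (D h))"
proof -
  have "teq3 s s s [(a1, a2, b). (a,b) \<leftarrow> D h, (a1,a2) \<leftarrow> D a] [(a, b1, b2). (a,b) \<leftarrow> D h, (b1,b2) \<leftarrow> D b]"
    using bialg by (simp add: bialg_def)
  from teq3_sum_list_eq[OF this vT assms] show ?thesis
    by (simp add: sum_list_map_concat split_def o_def)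
qed

lemma comult_m_sum:
  assumes "\<And>w. klinear s sT (\<lambda>v. F v w)" "\<And>v. klinear s sT (\<lambda>w. F v w)"
  shows "sum_list (map (\<lambda>z. F (fst z) (snd z)) (D (m x y)))
       = sum_list (map (\<lambda>p. sum_list (map (\<lambda>q. F (m (fst p) (fst q)) (m (snd p) (snd q))) (D y))) (D x))"
proof -
  have "teq2 s s (D (m x y)) [(m a c, m b d). (a,b) \<leftarrow> D x, (c,d) \<leftarrow> D y]"
    using bialg by (simp add: bialg_def)
  from teq2_sum_list_eq[OF this vT assms] show ?thesis
    by (simp add: sum_list_map_concat split_def o_def)
qed

lemma comult_u_sum:
  assumes "\<And>w. klinear s sT (\<lambda>v. F v w)" "\<And>v. klinear s sT (\<lambda>w. F v w)"
  shows "sum_list (map (\<lambda>z. F (fst z) (snd z)) (D u)) = F u u"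
proof -
  have "teq2 s s (D u) [(u, u)]"
    using bialg by (simp add: bialg_def)
  from teq2_sum_list_eq[OF this vT assms] show ?thesis by simp
qed

lemma comult_antipode_sum_klinear:
  assumes "\<And>w. klinear s sT (\<lambda>v. F v w)" and "\<And>v. klinear s sT (\<lambda>w. F v w)"
  shows "klinear s sT (\<lambda>x. sum_list (map (\<lambda>z. F (fst z) (snd z)) (D (S x))))"
  by (rule klinear_compose[OF antipode_klinear comult_sum_klinear[OF assms]])

lemma counit_left_sum:
  assumes L: "klinear s sT L"
  shows "sum_list (map (\<lambda>z. sT (e (fst z)) (L (snd z))) (D h)) = L h"
  using arg_cong[OF counit_left[of h], of L]
  by (simp add: klinear_sum_list[OF L] klinear_scale[OF L] split_def)

lemma counit_right_sum:
  assumes L: "klinear s sT L"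
  shows "sum_list (map (\<lambda>z. sT (e (snd z)) (L (fst z))) (D h)) = L h"
  using arg_cong[OF counit_right[of h], of L]
  by (simp add: klinear_sum_list[OF L] klinear_scale[OF L] split_def)

end

lemma antipode_left_sum:
  assumes L: "klinear s sT L"
  shows "sum_list (map (\<lambda>z. L (m (S (fst z)) (snd z))) (D h)) = sT (e h) (L u)"
  using arg_cong[OF antipode_left[of h], of L]
  by (simp add: klinear_sum_list[OF L] klinear_scale[OF L] split_def)

lemma antipode_right_sum:
  assumes L: "klinear s sT L"
  shows "sum_list (map (\<lambda>z. L (m (fst z) (S (snd z)))) (D h)) = sT (e h) (L u)"
  using arg_cong[OF antipode_right[of h], of L]
  by (simp add: klinear_sum_list[OF L] klinear_scale[OF L] split_def)

lemma bialg_op: "bialg s (\<lambda>x y. m y x) u D e"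
proof -
  have "teq2 s s (D (m y x)) [(m c a, m d b). (a,b) \<leftarrow> D x, (c,d) \<leftarrow> D y]" for x y
  proof (rule teq2I)
    fix f assume f: "bilin s s f"
    show "sum_list (map (\<lambda>z. f (fst z) (snd z)) (D (m y x))) =
      sum_list (map (\<lambda>z. f (fst z) (snd z)) [(m c a, m d b). (a,b) \<leftarrow> D x, (c,d) \<leftarrow> D y])"
      using f by (subst comult_m_sum[OF vector_space_field_mult])
        (simp_all add: klinear_simps bilin_simps sum_list_map_concat split_def o_def sum_list_map_swap[of _ "D x"])
  qed
  then show ?thesis
    using bialg by (simp add: bialg_def kalg_def m_assoc counit_m mult.commute)
qed

lemma antipode_u [simp]: "S u = u"
proof -
  have "sum_list (map (\<lambda>z. m (S (fst z)) (snd z)) (D u)) = m (S u) u"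
    by (rule comult_u_sum[OF scale_vector_space]) (simp_all add: klinear_simps)
  with antipode_left[of u] show ?thesis by (simp add: split_def)
qed

lemma counit_antipode [simp]: "e (S x) = e x"
proof -
  have "e (S x) = e (S (sum_list (map (\<lambda>(a,b). s (e b) a) (D x))))" by (simp add: counit_right)
  also have "\<dots> = e (sum_list (map (\<lambda>(a,b). m (S a) b) (D x)))"
    by (simp add: antipode_sum_list klinear_sum_list[OF counit_klinear] split_def counit_m mult.commute)
  also have "\<dots> = e x" by (simp add: antipode_left)
  finally show ?thesis .
qed

lemma antipode_left_cancel: "sum_list (map (\<lambda>z. m x (m (S (fst z)) (m (snd z) y))) (D h)) = s (e h) (m x y)"
  using antipode_left_sum[of s "\<lambda>w. m x (m w y)" h] by (simp add: klinear_simps m_assoc)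

text \<open>In Sweedler notation the right-hand side is S(y_1) y_2 S(x y_3).\<close>

lemma antipode_swap_mult_expand:
  "m (S y) (S x) = sum_list (map (\<lambda>b. sum_list (map (\<lambda>q.
      m (S (fst b)) (m (fst q) (S (m x (snd q))))) (D (snd b)))) (D y))"
proof -
  note vs = scale_vector_space
  have counit: "m (S y) (S a) = sum_list (map (\<lambda>b. s (e (snd b)) (m (S (fst b)) (S a))) (D y))" for a
    by (rule counit_right_sum[OF vs, of "\<lambda>w. m (S w) (S a)", symmetric]) (simp add: klinear_simps)
  have antipode: "s (e h) (m (S b) (S a)) = sum_list (map (\<lambda>c. m (S b) (m (S a) (m (fst c) (S (snd c))))) (D h))"
    for a b h
    using antipode_right_sum[of s "\<lambda>w. m (S b) (m (S a) w)"] by (simp add: klinear_simps)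
  have mult: "sum_list (map (\<lambda>c. m (S b) (m (S a) (m (fst c) (S (snd c))))) (D (m h k)))
      = sum_list (map (\<lambda>p. sum_list (map (\<lambda>q. m (S b) (m (S a) (m (m (fst p) (fst q)) (S (m (snd p) (snd q))))))
          (D k))) (D h))" for a b h k
    by (rule comult_m_sum[OF vs, of "\<lambda>v w. m (S b) (m (S a) (m v (S w)))"]) (simp_all add: klinear_simps)
  have "m (S y) (S x) = sum_list (map (\<lambda>a. s (e (snd a)) (m (S y) (S (fst a)))) (D x))"
    by (rule counit_right_sum[OF vs, of "\<lambda>w. m (S y) (S w)", symmetric]) (simp add: klinear_simps)
  also have "\<dots> = sum_list (map (\<lambda>a. sum_list (map (\<lambda>b.
      s (e (m (snd a) (snd b))) (m (S (fst b)) (S (fst a)))) (D y))) (D x))"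
    by (simp add: counit counit_m)
  also have "\<dots> = sum_list (map (\<lambda>a. sum_list (map (\<lambda>b. sum_list (map (\<lambda>c.
      m (S (fst b)) (m (S (fst a)) (m (fst c) (S (snd c))))) (D (m (snd a) (snd b))))) (D y))) (D x))"
    by (simp only: antipode)
  also have "\<dots> = sum_list (map (\<lambda>a. sum_list (map (\<lambda>p. sum_list (map (\<lambda>b. sum_list (map (\<lambda>q.
      m (S (fst b)) (m (S (fst a)) (m (m (fst p) (fst q)) (S (m (snd p) (snd q))))))
      (D (snd b)))) (D y))) (D (snd a)))) (D x))"
    by (simp only: mult sum_list_map_swap[of _ "D y"])
  also have "\<dots> = sum_list (map (\<lambda>a. sum_list (map (\<lambda>p. sum_list (map (\<lambda>b. sum_list (map (\<lambda>q.
      m (S (fst b)) (m (S (fst p)) (m (m (snd p) (fst q)) (S (m (snd a) (snd q))))))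
      (D (snd b)))) (D y))) (D (fst a)))) (D x))"
    by (rule coassoc_sum[OF vs, of "\<lambda>a1 p1 p2. sum_list (map (\<lambda>b. sum_list (map (\<lambda>q.
        m (S (fst b)) (m (S a1) (m (m p1 (fst q)) (S (m p2 (snd q)))))) (D (snd b)))) (D y))", symmetric])
      (simp_all add: klinear_simps)
  also have "\<dots> = sum_list (map (\<lambda>a. sum_list (map (\<lambda>b. sum_list (map (\<lambda>q.
      s (e (fst a)) (m (S (fst b)) (m (fst q) (S (m (snd a) (snd q)))))) (D (snd b)))) (D y))) (D x))"
    by (simp only: sum_list_map_swap_nested m_assoc antipode_left_cancel)
  also have "\<dots> = sum_list (map (\<lambda>b. sum_list (map (\<lambda>q.
      m (S (fst b)) (m (fst q) (S (m x (snd q))))) (D (snd b)))) (D y))"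
    by (rule trans[OF _ counit_left_sum[OF vs, of "\<lambda>w. sum_list (map (\<lambda>b. sum_list (map (\<lambda>q.
        m (S (fst b)) (m (fst q) (S (m w (snd q))))) (D (snd b)))) (D y))" x]]) (simp_all add: klinear_simps)
  finally show ?thesis .
qed

lemma antipode_antimult: "S (m x y) = m (S y) (S x)"
proof -
  have "m (S y) (S x) = sum_list (map (\<lambda>b. sum_list (map (\<lambda>q.
      m (S (fst q)) (m (snd q) (S (m x (snd b))))) (D (fst b)))) (D y))"
    unfolding antipode_swap_mult_expand
    by (rule coassoc_sum[OF scale_vector_space, of "\<lambda>b1 q1 q2. m (S b1) (m q1 (S (m x q2)))", symmetric])
      (simp_all add: klinear_simps)
  also have "\<dots> = sum_list (map (\<lambda>b. s (e (fst b)) (S (m x (snd b)))) (D y))"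
    using antipode_left_sum[of s "\<lambda>w. m w _"] by (simp add: klinear_simps m_assoc)
  also have "\<dots> = S (m x y)"
    by (rule counit_left_sum[OF scale_vector_space]) (simp add: klinear_simps)
  finally show ?thesis by simp
qed

lemma counit_comult_antipode_sum:
  assumes f: "bilin s s f"
  shows "e c * f x y = sum_list (map (\<lambda>q. sum_list (map (\<lambda>t. f (m x (fst t)) (m y (snd t)))
      (D (m (fst q) (S (snd q)))))) (D c))"
proof -
  note vs = vector_space_field_mult and [simp] = bilin_simps[OF f]
  have "sum_list (map (\<lambda>t. f (m x (fst t)) (m y (snd t))) (D u)) = f x y"
    by (rule comult_u_sum[OF vs, of "\<lambda>v w. f (m x v) (m y w)", simplified]) (simp_all add: klinear_simps)
  moreover have "sum_list (map (\<lambda>q. sum_list (map (\<lambda>t. f (m x (fst t)) (m y (snd t)))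
      (D (m (fst q) (S (snd q)))))) (D c))
    = e c * sum_list (map (\<lambda>t. f (m x (fst t)) (m y (snd t))) (D u))"
    by (rule antipode_right_sum[of "(*)" "\<lambda>v. sum_list (map (\<lambda>t. f (m x (fst t)) (m y (snd t))) (D v))"])
      (rule comult_sum_klinear[OF vs]; simp add: klinear_simps)
  ultimately show ?thesis by simp
qed

text \<open>The common value of the next two lemmas is, in Sweedler notation,
  f (S h_2 h_3 (S h_5)_1) (S h_1 h_4 (S h_5)_2).\<close>

lemma antipode_anticomult_expand_left:
  assumes f: "bilin s s f"
  shows "sum_list (map (\<lambda>z. f (S (snd z)) (S (fst z))) (D h)) =
    sum_list (map (\<lambda>z. sum_list (map (\<lambda>w. sum_list (map (\<lambda>q. sum_list (map (\<lambda>r. sum_list (map (\<lambda>t.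
      f (m (S (fst q)) (m (snd q) (fst t))) (m (S (fst z)) (m (fst r) (snd t))))
      (D (S (snd r))))) (D (snd w)))) (D (fst w)))) (D (snd z)))) (D h))"
proof -
  note vs = vector_space_field_mult and [simp] = bilin_simps[OF f]
  have counit: "f (S c) (S a) = sum_list (map (\<lambda>w. e (snd w) * f (S (fst w)) (S a)) (D c))" for a c
    by (rule counit_right_sum[OF vs, of "\<lambda>v. f (S v) (S a)" c, symmetric]) (simp add: klinear_simps)
  have mult: "sum_list (map (\<lambda>t. f (m (S b) (fst t)) (m (S a) (snd t))) (D (m k l)))
    = sum_list (map (\<lambda>r. sum_list (map (\<lambda>t. f (m (S b) (m (fst r) (fst t))) (m (S a) (m (snd r) (snd t))))
        (D l))) (D k))" for a b k l
    by (rule comult_m_sum[OF vs, of "\<lambda>v w. f (m (S b) v) (m (S a) w)"]) (simp_all add: klinear_simps)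
  have "sum_list (map (\<lambda>z. f (S (snd z)) (S (fst z))) (D h)) =
      sum_list (map (\<lambda>z. sum_list (map (\<lambda>w. e (snd w) * f (S (fst w)) (S (fst z))) (D (snd z)))) (D h))"
    by (rule sum_list_map_cong) (rule counit)
  also have "\<dots> = sum_list (map (\<lambda>z. sum_list (map (\<lambda>w. sum_list (map (\<lambda>q. sum_list (map (\<lambda>r. sum_list (map (\<lambda>t.
      f (m (S (fst w)) (m (fst r) (fst t))) (m (S (fst z)) (m (snd r) (snd t))))
      (D (S (snd q))))) (D (fst q)))) (D (snd w)))) (D (snd z)))) (D h))"
    by (simp only: counit_comult_antipode_sum[OF f] mult)
  also have "\<dots> = sum_list (map (\<lambda>z. sum_list (map (\<lambda>w. sum_list (map (\<lambda>q. sum_list (map (\<lambda>r. sum_list (map (\<lambda>t.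
      f (m (S (fst w)) (m (fst q) (fst t))) (m (S (fst z)) (m (fst r) (snd t))))
      (D (S (snd r))))) (D (snd q)))) (D (snd w)))) (D (snd z)))) (D h))"
    apply (rule sum_list_map_cong, rule sum_list_map_cong)
    subgoal for z w
      by (rule coassoc_sum[OF vs, of "\<lambda>a b c. sum_list (map (\<lambda>t.
          f (m (S (fst w)) (m a (fst t))) (m (S (fst z)) (m b (snd t)))) (D (S c)))"])
        (simp add: klinear_simps, simp add: klinear_simps, rule comult_antipode_sum_klinear[OF vs], simp_all add: klinear_simps)
    done
  also have "\<dots> = sum_list (map (\<lambda>z. sum_list (map (\<lambda>w. sum_list (map (\<lambda>q. sum_list (map (\<lambda>r. sum_list (map (\<lambda>t.
      f (m (S (fst q)) (m (snd q) (fst t))) (m (S (fst z)) (m (fst r) (snd t))))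
      (D (S (snd r))))) (D (snd w)))) (D (fst w)))) (D (snd z)))) (D h))"
    apply (rule sum_list_map_cong)
    subgoal for z
      by (rule coassoc_sum[OF vs, of "\<lambda>a b c. sum_list (map (\<lambda>r. sum_list (map (\<lambda>t.
          f (m (S a) (m b (fst t))) (m (S (fst z)) (m (fst r) (snd t)))) (D (S (snd r))))) (D c))", symmetric])
        (simp add: klinear_simps, simp add: klinear_simps, rule comult_sum_klinear[OF vs], simp add: klinear_simps,
          rule comult_antipode_sum_klinear[OF vs], simp_all add: klinear_simps)
    done
  finally show ?thesis .
qed

lemma antipode_anticomult_expand_right:
  assumes f: "bilin s s f"
  shows "sum_list (map (\<lambda>t. f (fst t) (snd t)) (D (S h))) =
    sum_list (map (\<lambda>z. sum_list (map (\<lambda>w. sum_list (map (\<lambda>q. sum_list (map (\<lambda>r. sum_list (map (\<lambda>t.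
      f (m (S (fst q)) (m (snd q) (fst t))) (m (S (fst z)) (m (fst r) (snd t))))
      (D (S (snd r))))) (D (snd w)))) (D (fst w)))) (D (snd z)))) (D h))"
proof -
  note vs = vector_space_field_mult and [simp] = bilin_simps[OF f]
  have cancel1: "sum_list (map (\<lambda>q. f (m (S (fst q)) (m (snd q) x)) y) (D c)) = e c * f x y" for c x y
    using antipode_left_sum[of "(*)" "\<lambda>v. f (m v x) y" c] by (simp add: klinear_simps m_assoc)
  have cancel2: "sum_list (map (\<lambda>q. f x (m (S (fst q)) (m (snd q) y))) (D c)) = e c * f x y" for c x y
    using antipode_left_sum[of "(*)" "\<lambda>v. f x (m v y)" c] by (simp add: klinear_simps m_assoc)
  have "sum_list (map (\<lambda>z. sum_list (map (\<lambda>w. sum_list (map (\<lambda>q. sum_list (map (\<lambda>r. sum_list (map (\<lambda>t.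
      f (m (S (fst q)) (m (snd q) (fst t))) (m (S (fst z)) (m (fst r) (snd t))))
      (D (S (snd r))))) (D (snd w)))) (D (fst w)))) (D (snd z)))) (D h))
    = sum_list (map (\<lambda>z. sum_list (map (\<lambda>w. sum_list (map (\<lambda>r. sum_list (map (\<lambda>t.
      e (fst w) * f (fst t) (m (S (fst z)) (m (fst r) (snd t))))
      (D (S (snd r))))) (D (snd w)))) (D (snd z)))) (D h))"
    by (simp only: sum_list_map_swap_nested cancel1)
  also have "\<dots> = sum_list (map (\<lambda>z. sum_list (map (\<lambda>r. sum_list (map (\<lambda>t.
      f (fst t) (m (S (fst z)) (m (fst r) (snd t)))) (D (S (snd r))))) (D (snd z)))) (D h))"
    apply (rule sum_list_map_cong)
    subgoal for z
      by (rule trans[OF _ counit_left_sum[OF vs, of "\<lambda>v. sum_list (map (\<lambda>r. sum_list (map (\<lambda>t.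
          f (fst t) (m (S (fst z)) (m (fst r) (snd t)))) (D (S (snd r))))) (D v))" "snd z"]])
        (simp add: klinear_simps, rule comult_sum_klinear[OF vs], simp add: klinear_simps,
          rule comult_antipode_sum_klinear[OF vs], simp_all add: klinear_simps)
    done
  also have "\<dots> = sum_list (map (\<lambda>z. sum_list (map (\<lambda>r. sum_list (map (\<lambda>t.
      f (fst t) (m (S (fst r)) (m (snd r) (snd t)))) (D (S (snd z))))) (D (fst z)))) (D h))"
    by (rule coassoc_sum[OF vs, of "\<lambda>a b c. sum_list (map (\<lambda>t. f (fst t) (m (S a) (m b (snd t)))) (D (S c)))", symmetric])
      (simp add: klinear_simps, simp add: klinear_simps, rule comult_antipode_sum_klinear[OF vs], simp_all add: klinear_simps)
  also have "\<dots> = sum_list (map (\<lambda>z. e (fst z) * sum_list (map (\<lambda>t. f (fst t) (snd t)) (D (S (snd z))))) (D h))"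
    by (simp only: sum_list_map_swap cancel2 sum_list_const_mult)
  also have "\<dots> = sum_list (map (\<lambda>t. f (fst t) (snd t)) (D (S h)))"
    by (rule counit_left_sum[OF vs]) (rule comult_antipode_sum_klinear[OF vs]; simp add: klinear_simps)
  finally show ?thesis by (rule sym)
qed

lemma antipode_anticomult_sum:
  assumes "bilin s s f"
  shows "sum_list (map (\<lambda>t. f (fst t) (snd t)) (D (S h))) = sum_list (map (\<lambda>z. f (S (snd z)) (S (fst z))) (D h))"
  using antipode_anticomult_expand_left[OF assms] antipode_anticomult_expand_right[OF assms] by simp

end

locale hopf_alg_bij = hopf_alg +
  assumes bij_antipode: "bij S"
begin

lemma inv_antipode [simp]: "inv S (S x) = x" and antipode_inv [simp]: "S (inv S x) = x"
  using bij_antipode by (simp_all add: bij_def surj_f_inv_f)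

lemma antipode_inj: "S x = S y \<Longrightarrow> x = y"
  by (metis inv_antipode)

lemma inv_antipode_simps [simp]: "inv S (x + y) = inv S x + inv S y" "inv S (s c x) = s c (inv S x)" "inv S u = u"
  by (rule antipode_inj, simp)+

lemma counit_inv_antipode [simp]: "e (inv S x) = e x"
  by (metis antipode_inv counit_antipode)

lemma inv_antipode_antimult: "inv S (m x y) = m (inv S y) (inv S x)"
  by (rule antipode_inj) (simp add: antipode_antimult)

lemma inv_antipode_anticomult: "teq2 s s (D (inv S h)) (map (\<lambda>(a,b). (inv S b, inv S a)) (D h))"
proof (rule teq2I)
  fix f assume "bilin s s f"
  then have "bilin s s (\<lambda>v w. f (inv S w) (inv S v))"
    unfolding bilin_def klinear_def by simp
  from antipode_anticomult_sum[OF this, of "inv S h"]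
  show "sum_list (map (\<lambda>z. f (fst z) (snd z)) (D (inv S h)))
      = sum_list (map (\<lambda>z. f (fst z) (snd z)) (map (\<lambda>(a,b). (inv S b, inv S a)) (D h)))"
    by (simp add: split_def o_def)
qed

lemma inv_antipode_anticomult_sum:
  assumes "vector_space sT" "\<And>w. klinear s sT (\<lambda>v. F v w)" "\<And>v. klinear s sT (\<lambda>w. F v w)"
  shows "sum_list (map (\<lambda>t. F (fst t) (snd t)) (D (inv S h)))
       = sum_list (map (\<lambda>t. F (inv S (snd t)) (inv S (fst t))) (D h))"
  using teq2_sum_list_eq[OF inv_antipode_anticomult assms] by (simp add: split_def o_def)

lemma inv_antipode_left: "sum_list (map (\<lambda>z. m (snd z) (inv S (fst z))) (D h)) = s (e h) u"
  by (rule antipode_inj) (use antipode_right[of h] in \<open>simp add: antipode_sum_list antipode_antimult split_def\<close>)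

lemma inv_antipode_right: "sum_list (map (\<lambda>z. m (inv S (snd z)) (fst z)) (D h)) = s (e h) u"
  by (rule antipode_inj) (use antipode_left[of h] in \<open>simp add: antipode_sum_list antipode_antimult split_def\<close>)

lemma inv_antipode_left_sum:
  assumes L: "klinear s sT L"
  shows "sum_list (map (\<lambda>z. L (m (snd z) (inv S (fst z)))) (D h)) = sT (e h) (L u)"
  using arg_cong[OF inv_antipode_left[of h], of L] by (simp add: klinear_sum_list[OF L] klinear_scale[OF L])

lemma inv_antipode_right_sum:
  assumes L: "klinear s sT L"
  shows "sum_list (map (\<lambda>z. L (m (inv S (snd z)) (fst z))) (D h)) = sT (e h) (L u)"
  using arg_cong[OF inv_antipode_right[of h], of L] by (simp add: klinear_sum_list[OF L] klinear_scale[OF L])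

end

locale right_twisting = hopf_alg_bij sH mH uH D e S
  for sH :: "'k::field \<Rightarrow> 'h::ab_group_add \<Rightarrow> 'h" and mH uH D e S +
  fixes sA :: "'k \<Rightarrow> 'a::ab_group_add \<Rightarrow> 'a" and mA :: "'a \<Rightarrow> 'a \<Rightarrow> 'a" and uA :: 'a
    and act :: "'a \<Rightarrow> 'h \<Rightarrow> 'a" and psi :: "'a \<Rightarrow> ('a \<times> 'h) list"
  assumes right_twisting: "right_twisting_datum sA mA uA sH mH uH D e act psi"
begin

lemma A_kalg: "kalg sA mA uA"
  using right_twisting by (simp add: right_twisting_datum_def)

lemma A_vector_space: "vector_space sA"
  using A_kalg by (simp add: kalg_def)

lemma mA_simps [simp]:
  "mA uA x = x" "mA x uA = x"
  "mA x (y + z) = mA x y + mA x z" "mA (x + y) z = mA x z + mA y z"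
  "mA (sA c x) y = sA c (mA x y)" "mA x (sA c y) = sA c (mA x y)"
  using A_kalg by (simp_all add: kalg_def)

lemma sA_sum_list [simp]: "sA c (sum_list (map f xs)) = sum_list (map (\<lambda>x. sA c (f x)) xs)"
  using A_vector_space by (rule vector_space_scale_sum_list)

lemma mA_sum_list_right: "mA x (sum_list (map f xs)) = sum_list (map (\<lambda>i. mA x (f i)) xs)"
  by (rule klinear_sum_list[of sA sA]) (simp add: klinear_def)

lemma act_klinear_left: "klinear sA sA (\<lambda>a. act a h)"
  and act_klinear_right: "klinear sH sA (\<lambda>h. act a h)"
  using right_twisting by (simp_all add: right_twisting_datum_def)

lemma act_simps [simp]:
  "act (x + y) h = act x h + act y h" "act (sA c x) h = sA c (act x h)"
  "act a (g + h) = act a g + act a h" "act a (sH c h) = sA c (act a h)"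
  "act 0 h = 0" "act a 0 = 0" "act a uH = a"
  using klinear_add[OF act_klinear_left] klinear_scale[OF act_klinear_left] klinear_zero[OF act_klinear_left]
    klinear_add[OF act_klinear_right] klinear_scale[OF act_klinear_right] klinear_zero[OF act_klinear_right]
    right_twisting
  by (simp_all add: right_twisting_datum_def)

lemma act_sum_list_left: "act (sum_list (map f xs)) h = sum_list (map (\<lambda>i. act (f i) h) xs)"
  by (rule klinear_sum_list[OF act_klinear_left])

lemma act_mH: "act a (mH h g) = act (act a h) g"
  and act_mA: "act (mA a b) h = sum_list (map (\<lambda>(h1,h2). mA (act a h1) (act b h2)) (D h))"
  and act_uA: "act uA h = sA (e h) uA"
  and psi_counit: "sum_list (map (\<lambda>(x,y). sA (e y) x) (psi a)) = a"
  using right_twisting by (simp_all add: right_twisting_datum_def)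

context
  fixes sT :: "'k \<Rightarrow> 't::ab_group_add \<Rightarrow> 't"
  assumes vT: "vector_space sT"
begin

lemma psi_sum_klinear:
  assumes l1: "\<And>w. klinear sA sT (\<lambda>v. F v w)" and l2: "\<And>v. klinear sH sT (\<lambda>w. F v w)"
  shows "klinear sA sT (\<lambda>x. sum_list (map (\<lambda>z. F (fst z) (snd z)) (psi x)))"
proof -
  have "teq2 sA sH (psi (x + y)) (psi x @ psi y)" "teq2 sA sH (psi (sA c x)) (map (\<lambda>(a,b). (sA c a, b)) (psi x))"
    for x y c using right_twisting by (simp_all add: right_twisting_datum_def)
  from teq2_sum_list_eq[OF this(1) vT l1 l2] teq2_sum_list_eq[OF this(2) vT l1 l2]
  show ?thesis
    by (simp add: klinear_def split_def o_def klinear_scale[OF l1] vector_space_scale_sum_list[OF vT])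
qed

lemma psi_coassoc_sum:
  assumes "\<And>v w. klinear sA sT (\<lambda>u. F u v w)" "\<And>u w. klinear sH sT (\<lambda>v. F u v w)"
    "\<And>u v. klinear sH sT (\<lambda>w. F u v w)"
  shows "sum_list (map (\<lambda>z. sum_list (map (\<lambda>p. F (fst p) (snd p) (snd z)) (psi (fst z)))) (psi a))
       = sum_list (map (\<lambda>z. sum_list (map (\<lambda>p. F (fst z) (fst p) (snd p)) (D (snd z)))) (psi a))"
proof -
  have "teq3 sA sH sH [(x0, x1, y). (x,y) \<leftarrow> psi a, (x0,x1) \<leftarrow> psi x] [(x, y1, y2). (x,y) \<leftarrow> psi a, (y1,y2) \<leftarrow> D y]"
    using right_twisting by (simp add: right_twisting_datum_def)
  from teq3_sum_list_eq[OF this vT assms] show ?thesis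
    by (simp add: sum_list_map_concat split_def o_def)
qed

lemma psi_mA_sum:
  assumes "\<And>w. klinear sA sT (\<lambda>v. F v w)" "\<And>v. klinear sH sT (\<lambda>w. F v w)"
  shows "sum_list (map (\<lambda>z. F (fst z) (snd z)) (psi (mA x y)))
       = sum_list (map (\<lambda>p. sum_list (map (\<lambda>q. F (mA (fst p) (fst q)) (mH (snd p) (snd q))) (psi y))) (psi x))"
proof -
  have "teq2 sA sH (psi (mA x y)) [(mA a c, mH b d). (a,b) \<leftarrow> psi x, (c,d) \<leftarrow> psi y]"
    using right_twisting by (simp add: right_twisting_datum_def)
  from teq2_sum_list_eq[OF this vT assms] show ?thesis
    by (simp add: sum_list_map_concat split_def o_def)
qed

lemma psi_uA_sum:
  assumes "\<And>w. klinear sA sT (\<lambda>v. F v w)" "\<And>v. klinear sH sT (\<lambda>w. F v w)"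
  shows "sum_list (map (\<lambda>z. F (fst z) (snd z)) (psi uA)) = F uA uH"
proof -
  have "teq2 sA sH (psi uA) [(uA, uH)]"
    using right_twisting by (simp add: right_twisting_datum_def)
  from teq2_sum_list_eq[OF this vT assms] show ?thesis by simp
qed

lemma psi_act_sum:
  assumes "\<And>w. klinear sA sT (\<lambda>v. F v w)" "\<And>v. klinear sH sT (\<lambda>w. F v w)"
  shows "sum_list (map (\<lambda>z. F (fst z) (snd z)) (psi (act a h)))
       = sum_list (map (\<lambda>z. F (act (fst z) h) (snd z)) (psi a))"
proof -
  have "teq2 sA sH (psi (act a h)) (map (\<lambda>(x,y). (act x h, y)) (psi a))"
    using right_twisting by (simp add: right_twisting_datum_def)
  from teq2_sum_list_eq[OF this vT assms] show ?thesis
    by (simp add: split_def o_def)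
qed

end

lemma psi_counit_sum: "sum_list (map (\<lambda>z. sA (e (snd z)) (fst z)) (psi a)) = a"
  using psi_counit[of a] by (simp add: split_def)

definition lact :: "'h \<Rightarrow> 'a \<Rightarrow> 'a" where
  "lact h a = act a h"

definition lcoact :: "'a \<Rightarrow> ('h \<times> 'a) list" where
  "lcoact a = map (\<lambda>(x,y). (inv S y, x)) (psi a)"

definition twist_iso :: "'a \<Rightarrow> 'a" where
  "twist_iso a = sum_list (map (\<lambda>z. act (fst z) (inv S (snd z))) (psi a))"

definition twist_iso_inv :: "'a \<Rightarrow> 'a" where
  "twist_iso_inv a = sum_list (map (\<lambda>z. act (fst z) (snd z)) (psi a))"

lemma lcoact_sum:
  "sum_list (map (\<lambda>z. f (fst z) (snd z)) (lcoact a)) = sum_list (map (\<lambda>z. f (inv S (snd z)) (fst z)) (psi a))"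
  by (simp add: lcoact_def split_def o_def)

lemma lcoact_add: "teq2 sH sA (lcoact (a + b)) (lcoact a @ lcoact b)"
proof (rule teq2I)
  fix f assume f: "bilin sH sA f"
  show "sum_list (map (\<lambda>z. f (fst z) (snd z)) (lcoact (a + b)))
      = sum_list (map (\<lambda>z. f (fst z) (snd z)) (lcoact a @ lcoact b))"
    unfolding map_append sum_list_append lcoact_sum
    by (rule klinear_add[OF psi_sum_klinear[OF vector_space_field_mult, of "\<lambda>v w. f (inv S w) v"]])
      (use f in \<open>simp_all add: klinear_simps bilin_simps\<close>)
qed

lemma lcoact_scale: "teq2 sH sA (lcoact (sA c a)) (map (\<lambda>(y,x). (y, sA c x)) (lcoact a))"
proof (rule teq2I)
  fix f assume f: "bilin sH sA f"
  have "sum_list (map (\<lambda>z. f (fst z) (snd z)) (lcoact (sA c a)))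
      = c * sum_list (map (\<lambda>z. f (inv S (snd z)) (fst z)) (psi a))"
    unfolding lcoact_sum
    by (rule klinear_scale[OF psi_sum_klinear[OF vector_space_field_mult, of "\<lambda>v w. f (inv S w) v"]])
      (use f in \<open>simp_all add: klinear_simps bilin_simps\<close>)
  then show "sum_list (map (\<lambda>z. f (fst z) (snd z)) (lcoact (sA c a)))
      = sum_list (map (\<lambda>z. f (fst z) (snd z)) (map (\<lambda>(y,x). (y, sA c x)) (lcoact a)))"
    using f by (simp add: lcoact_def split_def o_def bilin_simps sum_list_const_mult)
qed

lemma lcoact_coassoc: "teq3 sH sH sA [(y, x1, x0). (y,x) \<leftarrow> lcoact a, (x1,x0) \<leftarrow> lcoact x]
                           [(y1, y2, x). (y,x) \<leftarrow> lcoact a, (y1,y2) \<leftarrow> D y]"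
proof (rule teq3I)
  fix f assume f: "trilin sH sH sA f"
  note vs = vector_space_field_mult
  have "sum_list (map (\<lambda>z. f (fst z) (fst (snd z)) (snd (snd z))) [(y, x1, x0). (y,x) \<leftarrow> lcoact a, (x1,x0) \<leftarrow> lcoact x])
     = sum_list (map (\<lambda>z. sum_list (map (\<lambda>p. f (inv S (snd z)) (inv S (snd p)) (fst p)) (psi (fst z)))) (psi a))"
    by (simp add: lcoact_def sum_list_map_concat split_def o_def)
  also have "\<dots> = sum_list (map (\<lambda>z. sum_list (map (\<lambda>p. f (inv S (snd p)) (inv S (fst p)) (fst z)) (D (snd z)))) (psi a))"
    by (rule psi_coassoc_sum[OF vs, of "\<lambda>x y1 y2. f (inv S y2) (inv S y1) x"])
      (use f in \<open>simp_all add: klinear_simps trilin_simps\<close>)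
  also have "\<dots> = sum_list (map (\<lambda>z. sum_list (map (\<lambda>t. f (fst t) (snd t) (fst z)) (D (inv S (snd z))))) (psi a))"
    by (rule sum_list_map_cong, rule inv_antipode_anticomult_sum[OF vs, symmetric])
      (use f in \<open>simp_all add: klinear_simps trilin_simps\<close>)
  also have "\<dots> = sum_list (map (\<lambda>z. f (fst z) (fst (snd z)) (snd (snd z))) [(y1, y2, x). (y,x) \<leftarrow> lcoact a, (y1,y2) \<leftarrow> D y])"
    by (simp add: lcoact_def sum_list_map_concat split_def o_def)
  finally show "sum_list (map (\<lambda>z. f (fst z) (fst (snd z)) (snd (snd z))) [(y, x1, x0). (y,x) \<leftarrow> lcoact a, (x1,x0) \<leftarrow> lcoact x])
     = sum_list (map (\<lambda>z. f (fst z) (fst (snd z)) (snd (snd z))) [(y1, y2, x). (y,x) \<leftarrow> lcoact a, (y1,y2) \<leftarrow> D y])" .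
qed

lemma lcoact_counit: "sum_list (map (\<lambda>(y,x). sA (e y) x) (lcoact a)) = a"
  using psi_counit[of a] by (simp add: lcoact_def split_def o_def)

lemma lcoact_mA: "teq2 sH sA (lcoact (mA a b)) [(mH w y, mA x z). (y,x) \<leftarrow> lcoact a, (w,z) \<leftarrow> lcoact b]"
proof (rule teq2I)
  fix f assume "bilin sH sA f"
  then show "sum_list (map (\<lambda>z. f (fst z) (snd z)) (lcoact (mA a b)))
      = sum_list (map (\<lambda>z. f (fst z) (snd z)) [(mH w y, mA x z). (y,x) \<leftarrow> lcoact a, (w,z) \<leftarrow> lcoact b])"
    unfolding lcoact_sum
    by (subst psi_mA_sum[OF vector_space_field_mult, of "\<lambda>v w. f (inv S w) v"])
      (simp_all add: klinear_simps bilin_simps lcoact_def sum_list_map_concat split_def o_def inv_antipode_antimult)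
qed

lemma lcoact_uA: "teq2 sH sA (lcoact uA) [(uH, uA)]"
proof (rule teq2I)
  fix f assume "bilin sH sA f"
  then show "sum_list (map (\<lambda>z. f (fst z) (snd z)) (lcoact uA)) = sum_list (map (\<lambda>z. f (fst z) (snd z)) [(uH, uA)])"
    unfolding lcoact_sum
    by (subst psi_uA_sum[OF vector_space_field_mult, of "\<lambda>v w. f (inv S w) v"]) (simp_all add: klinear_simps bilin_simps)
qed

lemma lcoact_lact: "teq2 sH sA (lcoact (lact k a)) (map (\<lambda>(y,x). (y, lact k x)) (lcoact a))"
proof (rule teq2I)
  fix f assume "bilin sH sA f"
  then show "sum_list (map (\<lambda>z. f (fst z) (snd z)) (lcoact (lact k a)))
      = sum_list (map (\<lambda>z. f (fst z) (snd z)) (map (\<lambda>(y,x). (y, lact k x)) (lcoact a)))"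
    unfolding lcoact_sum lact_def
    by (subst psi_act_sum[OF vector_space_field_mult, of "\<lambda>v w. f (inv S w) v"])
      (simp_all add: klinear_simps bilin_simps lcoact_def split_def o_def)
qed

theorem left_twisting_datum_op: "left_twisting_datum sA mA uA sH (\<lambda>x y. mH y x) uH D e lact lcoact"
  unfolding left_twisting_datum_def
  using A_kalg bialg_op lcoact_add lcoact_scale lcoact_coassoc lcoact_counit lcoact_mA lcoact_uA lcoact_lact
    act_klinear_left act_klinear_right
  by (simp add: lact_def[abs_def] act_mH act_mA act_uA)

lemma twist_iso_klinear: "klinear sA sA twist_iso"
  unfolding twist_iso_def[abs_def]
  by (rule psi_sum_klinear[OF A_vector_space]) (simp_all add: klinear_simps)

lemma twist_iso_inv_klinear: "klinear sA sA twist_iso_inv"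
  unfolding twist_iso_inv_def[abs_def]
  by (rule psi_sum_klinear[OF A_vector_space]) (simp_all add: klinear_simps)

lemma twist_iso_uA: "twist_iso uA = uA"
  unfolding twist_iso_def by (subst psi_uA_sum[OF A_vector_space]) (simp_all add: klinear_simps)

lemma twist_iso_inv_twist_iso: "twist_iso_inv (twist_iso a) = a"
proof -
  note vs = A_vector_space
  have "twist_iso_inv (twist_iso a) = sum_list (map (\<lambda>z. twist_iso_inv (act (fst z) (inv S (snd z)))) (psi a))"
    unfolding twist_iso_def by (rule klinear_sum_list[OF twist_iso_inv_klinear])
  also have "\<dots> = sum_list (map (\<lambda>z. sum_list (map (\<lambda>w.
      act (fst w) (mH (inv S (snd z)) (snd w))) (psi (fst z)))) (psi a))"
    unfolding twist_iso_inv_def by (subst psi_act_sum[OF vs]) (simp_all add: klinear_simps act_mH)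
  also have "\<dots> = sum_list (map (\<lambda>z. sum_list (map (\<lambda>q.
      act (fst z) (mH (inv S (snd q)) (fst q))) (D (snd z)))) (psi a))"
    by (rule psi_coassoc_sum[OF vs, of "\<lambda>x y1 y2. act x (mH (inv S y2) y1)"]) (simp_all add: klinear_simps)
  also have "\<dots> = a"
    by (simp add: inv_antipode_right_sum[OF act_klinear_right] psi_counit_sum)
  finally show ?thesis .
qed

lemma twist_iso_twist_iso_inv: "twist_iso (twist_iso_inv a) = a"
proof -
  note vs = A_vector_space
  have "twist_iso (twist_iso_inv a) = sum_list (map (\<lambda>z. twist_iso (act (fst z) (snd z))) (psi a))"
    unfolding twist_iso_inv_def by (rule klinear_sum_list[OF twist_iso_klinear])
  also have "\<dots> = sum_list (map (\<lambda>z. sum_list (map (\<lambda>w.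
      act (fst w) (mH (snd z) (inv S (snd w)))) (psi (fst z)))) (psi a))"
    unfolding twist_iso_def by (subst psi_act_sum[OF vs]) (simp_all add: klinear_simps act_mH)
  also have "\<dots> = sum_list (map (\<lambda>z. sum_list (map (\<lambda>q.
      act (fst z) (mH (snd q) (inv S (fst q)))) (D (snd z)))) (psi a))"
    by (rule psi_coassoc_sum[OF vs, of "\<lambda>x y1 y2. act x (mH y2 (inv S y1))"]) (simp_all add: klinear_simps)
  also have "\<dots> = a"
    by (simp add: inv_antipode_left_sum[OF act_klinear_right] psi_counit_sum)
  finally show ?thesis .
qed

lemma left_twisted_prod_twist_iso:
  "left_twisted_prod mA lact lcoact (twist_iso a) y = sum_list (map (\<lambda>z. sum_list (map (\<lambda>q.
      mA (act (fst z) (inv S (snd q))) (act y (inv S (fst q)))) (D (snd z)))) (psi a))"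
proof -
  note vs = A_vector_space
  have lin: "klinear sA sA (\<lambda>x. sum_list (map (\<lambda>w. mA (fst w) (act y (inv S (snd w)))) (psi x)))"
    by (rule psi_sum_klinear[OF vs]) (simp_all add: klinear_simps)
  have "left_twisted_prod mA lact lcoact (twist_iso a) y
      = sum_list (map (\<lambda>w. mA (fst w) (act y (inv S (snd w)))) (psi (twist_iso a)))"
    by (simp add: left_twisted_prod_def lact_def lcoact_def split_def o_def)
  also have "\<dots> = sum_list (map (\<lambda>z. sum_list (map (\<lambda>w.
      mA (act (fst w) (inv S (snd z))) (act y (inv S (snd w)))) (psi (fst z)))) (psi a))"
    unfolding twist_iso_def klinear_sum_list[OF lin]
    by (rule sum_list_map_cong, rule psi_act_sum[OF vs]) (simp_all add: klinear_simps)
  also have "\<dots> = sum_list (map (\<lambda>z. sum_list (map (\<lambda>q.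
      mA (act (fst z) (inv S (snd q))) (act y (inv S (fst q)))) (D (snd z)))) (psi a))"
    by (rule psi_coassoc_sum[OF vs, of "\<lambda>x y1 y2. mA (act x (inv S y2)) (act y (inv S y1))"])
      (simp_all add: klinear_simps)
  finally show ?thesis .
qed

lemma twist_iso_right_twisted_prod:
  "twist_iso (right_twisted_prod mA act psi a b) = sum_list (map (\<lambda>p. sum_list (map (\<lambda>v. sum_list (map (\<lambda>r.
      act (mA (act (fst p) (snd r)) (fst v)) (mH (inv S (fst r)) (inv S (snd p)))) (D (snd v)))) (psi b))) (psi a))"
proof -
  note vs = A_vector_space
  have "twist_iso (right_twisted_prod mA act psi a b) = sum_list (map (\<lambda>v. twist_iso (mA (act a (snd v)) (fst v))) (psi b))"
    by (simp add: right_twisted_prod_def split_def klinear_sum_list[OF twist_iso_klinear])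
  also have "\<dots> = sum_list (map (\<lambda>v. sum_list (map (\<lambda>p. sum_list (map (\<lambda>q.
      act (mA (act (fst p) (snd v)) (fst q)) (mH (inv S (snd q)) (inv S (snd p)))) (psi (fst v)))) (psi a))) (psi b))"
  proof (rule sum_list_map_cong)
    fix v :: "'a \<times> 'h"
    have "twist_iso (mA (act a (snd v)) (fst v)) = sum_list (map (\<lambda>p. sum_list (map (\<lambda>q.
        act (mA (fst p) (fst q)) (mH (inv S (snd q)) (inv S (snd p)))) (psi (fst v)))) (psi (act a (snd v))))"
      unfolding twist_iso_def by (subst psi_mA_sum[OF vs]) (simp_all add: klinear_simps inv_antipode_antimult)
    also have "\<dots> = sum_list (map (\<lambda>p. sum_list (map (\<lambda>q.
        act (mA (act (fst p) (snd v)) (fst q)) (mH (inv S (snd q)) (inv S (snd p)))) (psi (fst v)))) (psi a))"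
      by (rule psi_act_sum[OF vs, of "\<lambda>x y. sum_list (map (\<lambda>q.
          act (mA x (fst q)) (mH (inv S (snd q)) (inv S y))) (psi (fst v)))"]) (simp_all add: klinear_simps)
    finally show "twist_iso (mA (act a (snd v)) (fst v)) = \<dots>" .
  qed
  also have "\<dots> = sum_list (map (\<lambda>p. sum_list (map (\<lambda>v. sum_list (map (\<lambda>q.
      act (mA (act (fst p) (snd v)) (fst q)) (mH (inv S (snd q)) (inv S (snd p)))) (psi (fst v)))) (psi b))) (psi a))"
    by (rule sum_list_map_swap)
  also have "\<dots> = sum_list (map (\<lambda>p. sum_list (map (\<lambda>v. sum_list (map (\<lambda>r.
      act (mA (act (fst p) (snd r)) (fst v)) (mH (inv S (fst r)) (inv S (snd p)))) (D (snd v)))) (psi b))) (psi a))"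
    apply (rule sum_list_map_cong)
    subgoal for p
      by (rule psi_coassoc_sum[OF vs, of "\<lambda>x y1 y2. act (mA (act (fst p) y2) x) (mH (inv S y1) (inv S (snd p)))"])
        (simp_all add: klinear_simps)
    done
  finally show ?thesis .
qed

lemma act_mA_inv_antipode:
  "act (mA (act x h) y) (mH (inv S g) (inv S k)) = sum_list (map (\<lambda>c. sum_list (map (\<lambda>d.
      mA (act x (mH h (mH (inv S (snd d)) (inv S (snd c))))) (act y (mH (inv S (fst d)) (inv S (fst c))))) (D g))) (D k))"
proof -
  note vs = A_vector_space
  have "act (mA (act x h) y) (mH (inv S g) (inv S k))
      = sum_list (map (\<lambda>t. mA (act (act x h) (fst t)) (act y (snd t))) (D (inv S (mH k g))))"
    by (simp add: inv_antipode_antimult act_mA split_def)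
  also have "\<dots> = sum_list (map (\<lambda>t. mA (act (act x h) (inv S (snd t))) (act y (inv S (fst t)))) (D (mH k g)))"
    by (rule inv_antipode_anticomult_sum[OF vs, of "\<lambda>v w. mA (act (act x h) v) (act y w)"]) (simp_all add: klinear_simps)
  also have "\<dots> = sum_list (map (\<lambda>c. sum_list (map (\<lambda>d.
      mA (act (act x h) (inv S (mH (snd c) (snd d)))) (act y (inv S (mH (fst c) (fst d))))) (D g))) (D k))"
    by (rule comult_m_sum[OF vs, of "\<lambda>v w. mA (act (act x h) (inv S w)) (act y (inv S v))"]) (simp_all add: klinear_simps)
  also have "\<dots> = sum_list (map (\<lambda>c. sum_list (map (\<lambda>d.
      mA (act x (mH h (mH (inv S (snd d)) (inv S (snd c))))) (act y (mH (inv S (fst d)) (inv S (fst c))))) (D g))) (D k))"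
    by (simp add: inv_antipode_antimult act_mH)
  finally show ?thesis .
qed

lemma inv_antipode_act_cancel:
  "sum_list (map (\<lambda>d. mA (act x (mH (snd d) (mH (inv S (fst d)) y))) z) (D h)) = sA (e h) (mA (act x y) z)"
  using inv_antipode_left_sum[of sA "\<lambda>w. mA (act x (mH w y)) z" h] by (simp add: klinear_simps m_assoc)

lemma twist_iso_right_twisted_prod_reduced:
  "twist_iso (right_twisted_prod mA act psi a b) = sum_list (map (\<lambda>p. sum_list (map (\<lambda>v. sum_list (map (\<lambda>c.
      mA (act (fst p) (inv S (snd c))) (act (fst v) (mH (inv S (snd v)) (inv S (fst c))))) (D (snd p)))) (psi b))) (psi a))"
proof -
  note vs = A_vector_space
  have "twist_iso (right_twisted_prod mA act psi a b) = sum_list (map (\<lambda>p. sum_list (map (\<lambda>v. sum_list (map (\<lambda>r.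
      sum_list (map (\<lambda>d. sum_list (map (\<lambda>c. mA (act (fst p) (mH (snd r) (mH (inv S (snd d)) (inv S (snd c)))))
        (act (fst v) (mH (inv S (fst d)) (inv S (fst c))))) (D (snd p)))) (D (fst r)))) (D (snd v)))) (psi b))) (psi a))"
    unfolding twist_iso_right_twisted_prod act_mA_inv_antipode by (intro sum_list_map_cong) (rule sum_list_map_swap)
  also have "\<dots> = sum_list (map (\<lambda>p. sum_list (map (\<lambda>v. sum_list (map (\<lambda>r.
      sum_list (map (\<lambda>d. sum_list (map (\<lambda>c. mA (act (fst p) (mH (snd d) (mH (inv S (fst d)) (inv S (snd c)))))
        (act (fst v) (mH (inv S (fst r)) (inv S (fst c))))) (D (snd p)))) (D (snd r)))) (D (snd v)))) (psi b))) (psi a))"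
    apply (rule sum_list_map_cong, rule sum_list_map_cong)
    subgoal for p v
      by (rule coassoc_sum[OF vs, of "\<lambda>x y z. sum_list (map (\<lambda>c. mA (act (fst p) (mH z (mH (inv S y) (inv S (snd c)))))
          (act (fst v) (mH (inv S x) (inv S (fst c))))) (D (snd p)))" "snd v"]) (simp_all add: klinear_simps)
    done
  also have "\<dots> = sum_list (map (\<lambda>p. sum_list (map (\<lambda>v. sum_list (map (\<lambda>r. sum_list (map (\<lambda>c.
      sA (e (snd r)) (mA (act (fst p) (inv S (snd c))) (act (fst v) (mH (inv S (fst r)) (inv S (fst c))))))
      (D (snd p)))) (D (snd v)))) (psi b))) (psi a))"
  proof -
    have "sum_list (map (\<lambda>d. sum_list (map (\<lambda>c. mA (act x (mH (snd d) (mH (inv S (fst d)) (inv S (snd c)))))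
        (act y (mH (inv S r) (inv S (fst c))))) (D k))) (D h))
      = sum_list (map (\<lambda>c. sA (e h) (mA (act x (inv S (snd c))) (act y (mH (inv S r) (inv S (fst c)))))) (D k))"
      for x y r h k
      by (subst sum_list_map_swap) (simp only: inv_antipode_act_cancel)
    then show ?thesis by (simp only:)
  qed
  also have "\<dots> = sum_list (map (\<lambda>p. sum_list (map (\<lambda>v. sum_list (map (\<lambda>c.
      mA (act (fst p) (inv S (snd c))) (act (fst v) (mH (inv S (snd v)) (inv S (fst c))))) (D (snd p)))) (psi b))) (psi a))"
    apply (rule sum_list_map_cong, rule sum_list_map_cong)
    subgoal for p v
      by (rule trans[OF _ counit_right_sum[OF vs, of "\<lambda>w. sum_list (map (\<lambda>c.
          mA (act (fst p) (inv S (snd c))) (act (fst v) (mH (inv S w) (inv S (fst c))))) (D (snd p)))" "snd v"]])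
        (simp_all add: klinear_simps)
    done
  finally show ?thesis .
qed

theorem twist_iso_mult:
  "twist_iso (right_twisted_prod mA act psi a b) = left_twisted_prod mA lact lcoact (twist_iso a) (twist_iso b)"
proof -
  have "left_twisted_prod mA lact lcoact (twist_iso a) (twist_iso b) = sum_list (map (\<lambda>p. sum_list (map (\<lambda>c.
      sum_list (map (\<lambda>v. mA (act (fst p) (inv S (snd c))) (act (fst v) (mH (inv S (snd v)) (inv S (fst c)))))
      (psi b))) (D (snd p)))) (psi a))"
    unfolding left_twisted_prod_twist_iso twist_iso_def[of b]
    by (simp add: act_sum_list_left mA_sum_list_right act_mH)
  then show ?thesis
    unfolding twist_iso_right_twisted_prod_reduced by (simp only:) (intro sum_list_map_cong, rule sum_list_map_swap)
qed

end

theorem theorem4p8: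
  fixes sA :: "'k::field \<Rightarrow> 'a::ab_group_add \<Rightarrow> 'a" and mA :: "'a \<Rightarrow> 'a \<Rightarrow> 'a" and uA :: 'a
    and sH :: "'k \<Rightarrow> 'h::ab_group_add \<Rightarrow> 'h" and mH :: "'h \<Rightarrow> 'h \<Rightarrow> 'h" and uH :: 'h
    and D :: "'h \<Rightarrow> ('h \<times> 'h) list" and e :: "'h \<Rightarrow> 'k" and S :: "'h \<Rightarrow> 'h"
    and act :: "'a \<Rightarrow> 'h \<Rightarrow> 'a" and psi :: "'a \<Rightarrow> ('a \<times> 'h) list"
  assumes "right_twisting_datum sA mA uA sH mH uH D e act psi"
    and "hopf sH mH uH D e S"
    and "bij S"
  defines "pil \<equiv> (\<lambda>h a. act a h)"
    and "psil \<equiv> (\<lambda>a. map (\<lambda>(x,y). (inv S y, x)) (psi a))"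
    and "lam \<equiv> (\<lambda>a. sum_list (map (\<lambda>(x,y). act x (inv S y)) (psi a)))"
    and "laminv \<equiv> (\<lambda>a. sum_list (map (\<lambda>(x,y). act x y) (psi a)))"
  shows "left_twisting_datum sA mA uA sH (\<lambda>x y. mH y x) uH D e pil psil
     \<and> klinear sA sA lam
     \<and> (\<forall>a b. lam (right_twisted_prod mA act psi a b) = left_twisted_prod mA pil psil (lam a) (lam b))
     \<and> lam uA = uA
     \<and> bij lam
     \<and> (\<forall>a. laminv (lam a) = a \<and> lam (laminv a) = a)"
proof -
  interpret right_twisting sH mH uH D e S sA mA uA act psi
    by unfold_locales (use assms(1-3) in auto)
  have "pil = lact" "psil = lcoact" "lam = twist_iso" "laminv = twist_iso_inv"
    by (simp_all add: pil_def psil_def lam_def laminv_def fun_eq_iff split_def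
        lact_def lcoact_def twist_iso_def twist_iso_inv_def)
  moreover have "bij twist_iso"
    by (rule o_bij[of twist_iso_inv]) (simp_all add: fun_eq_iff twist_iso_inv_twist_iso twist_iso_twist_iso_inv)
  ultimately show ?thesis
    using left_twisting_datum_op twist_iso_klinear twist_iso_mult twist_iso_uA
      twist_iso_inv_twist_iso twist_iso_twist_iso_inv
    by simp
qed

end
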